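(* For every integer $n\ge 2$ and every nonzero real $x$, $$O_{n}'(x)+\frac{n}{x}O_{n}(x)=\sum_{j=1}^{n-1}O_{j}(x)O_{n-j}(x),$$ where $O_n'$ denotes the derivative of $O_n$ with respect to $x$.
   Context: For a nonzero real number $x$, the Oresme polynomials $O_n(x)$, $n\ge 0$, are defined by $O_{0}(x)=0$, $O_{1}(x)=\frac{1}{x}$, and $O_{n+1}(x)=O_{n}(x)-\frac{1}{x^{2}}O_{n-1}(x)$ for all $n\ge 1$; each $O_n$ is thus a rational function of $x$ (a polynomial in $1/x$), differentiable on $x\neq 0$. *)

theory Defs
  imports "HOL-Analysis.Analysis"
begin

fun oresme :: "nat \<Rightarrow> real \<Rightarrow> real" where
  "oresme 0 x = 0"
| "oresme (Suc 0) x = 1 / x"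
| "oresme (Suc (Suc n)) x = oresme (Suc n) x - (1 / x^2) * oresme n x"

end

theory Submission
  imports Defs
begin

text \<open>Write \<open>L\<^sub>n = O\<^sub>n' + (n/x) O\<^sub>n\<close> and \<open>S\<^sub>n\<close> for the convolution sum on the right.
Differentiating the three-term recurrence of the Oresme polynomials shows that \<open>L\<^sub>n\<close> obeys the
same recurrence with the inhomogeneous term \<open>O\<^sub>n\<^sub>+\<^sub>1/x\<close>:
\<open>L\<^sub>n\<^sub>+\<^sub>2 = L\<^sub>n\<^sub>+\<^sub>1 - L\<^sub>n/x\<^sup>2 + O\<^sub>n\<^sub>+\<^sub>1/x\<close>. Splitting off the last summand and applying the
recurrence to the second factor of every other summand shows that \<open>S\<^sub>n\<close> obeys it as well.
Both sequences vanish for \<open>n = 0, 1\<close>, so they coincide. The identity thus holds for every \<open>n\<close>.\<close>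

fun oresme_deriv :: "nat \<Rightarrow> real \<Rightarrow> real" where
  "oresme_deriv 0 x = 0"
| "oresme_deriv (Suc 0) x = - 1 / x^2"
| "oresme_deriv (Suc (Suc n)) x =
     oresme_deriv (Suc n) x - (1 / x^2) * oresme_deriv n x + (2 / x^3) * oresme n x"

lemma has_real_derivative_oresme:
  assumes "x \<noteq> 0"
  shows "(oresme n has_real_derivative oresme_deriv n x) (at x)"
  using assms
proof (induction n x rule: oresme.induct)
  case (1 x)
  then show ?case by simp
next
  case (2 x)
  have "((\<lambda>x. 1 / x) has_real_derivative - 1 / x^2) (at x)"
    using 2 by (auto intro!: derivative_eq_intros simp: power2_eq_square)
  then show ?case by simp
next
  case (3 n x)
  have recurrence: "oresme (Suc (Suc n)) = (\<lambda>x. oresme (Suc n) x - (1 / x^2) * oresme n x)"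
    by (rule ext) simp
  have "((\<lambda>x. 1 / x^2) has_real_derivative - 2 / x^3) (at x)"
    using 3 by (auto intro!: derivative_eq_intros simp: power2_eq_square power3_eq_cube)
  from DERIV_diff[OF "3.IH"(1)[OF "3.prems"] DERIV_mult[OF this "3.IH"(2)[OF "3.prems"]]]
  show ?case
    unfolding recurrence by (simp add: algebra_simps)
qed

definition oresme_convolution :: "nat \<Rightarrow> real \<Rightarrow> real" where
  "oresme_convolution n x = (\<Sum>j=1..n-1. oresme j x * oresme (n - j) x)"

lemma oresme_convolution_Suc_Suc:
  "oresme_convolution (Suc (Suc n)) x =
     oresme_convolution (Suc n) x - (1 / x^2) * oresme_convolution n x + oresme (Suc n) x / x"
proof -
  have split_last: "oresme_convolution (Suc (Suc n)) x =
      (\<Sum>j=1..n. oresme j x * oresme (Suc (Suc n) - j) x) + oresme (Suc n) x * oresme 1 x"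
    unfolding oresme_convolution_def by simp
  have "(\<Sum>j=1..n. oresme j x * oresme (Suc (Suc n) - j) x) =
      (\<Sum>j=1..n. oresme j x * oresme (Suc n - j) x - (1 / x^2) * (oresme j x * oresme (n - j) x))"
  proof (rule sum.cong)
    fix j
    assume "j \<in> {1..n}"
    then have "Suc (Suc n) - j = Suc (Suc (n - j))" "Suc n - j = Suc (n - j)"
      by auto
    then show "oresme j x * oresme (Suc (Suc n) - j) x =
        oresme j x * oresme (Suc n - j) x - (1 / x^2) * (oresme j x * oresme (n - j) x)"
      by (simp add: algebra_simps)
  qed simp
  also have "\<dots> = oresme_convolution (Suc n) x
      - (1 / x^2) * (\<Sum>j=1..n. oresme j x * oresme (n - j) x)"
    unfolding oresme_convolution_def by (simp add: sum_subtractf sum_distrib_left)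
  also have "(\<Sum>j=1..n. oresme j x * oresme (n - j) x) = oresme_convolution n x"
    \<comment> \<open>the extra summand \<open>j = n\<close> vanishes since \<open>O\<^sub>0 = 0\<close>\<close>
    unfolding oresme_convolution_def by (cases n) (simp_all add: sum.cl_ivl_Suc)
  finally show ?thesis
    using split_last by (simp add: divide_inverse)
qed

lemma oresme_deriv_identity:
  assumes "x \<noteq> 0"
  shows "oresme_deriv n x + (real n / x) * oresme n x = oresme_convolution n x"
  using assms
proof (induction n x rule: oresme.induct)
  case (1 x)
  then show ?case by (simp add: oresme_convolution_def)
next
  case (2 x)
  then show ?case by (simp add: oresme_convolution_def power2_eq_square)
next
  case (3 n x)
  have "oresme_deriv (Suc (Suc n)) x + (real (Suc (Suc n)) / x) * oresme (Suc (Suc n)) x =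
      (oresme_deriv (Suc n) x + (real (Suc n) / x) * oresme (Suc n) x)
      - (1 / x^2) * (oresme_deriv n x + (real n / x) * oresme n x) + oresme (Suc n) x / x"
    using "3.prems" by (simp add: field_simps power2_eq_square power3_eq_cube)
  then show ?case
    using 3 oresme_convolution_Suc_Suc by simp
qed

theorem mainTheorem12:
  fixes n :: nat and x :: real
  assumes "n \<ge> 2" and "x \<noteq> 0"
  shows "deriv (oresme n) x + (real n / x) * oresme n x
           = (\<Sum>j=1..n-1. oresme j x * oresme (n - j) x)"
proof -
  have "deriv (oresme n) x = oresme_deriv n x"
    using has_real_derivative_oresme[OF \<open>x \<noteq> 0\<close>] by (rule DERIV_imp_deriv)
  then show ?thesis
    using oresme_deriv_identity[OF \<open>x \<noteq> 0\<close>] by (simp add: oresme_convolution_def)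
qed

end
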